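(* Let $F=f+\mu c$ with $\mu>0$, $f:\mathbb{R}^n\to\mathbb{R}$ convex and continuously differentiable with $L$-Lipschitz gradient, and $c:\mathbb{R}^n\to\mathbb{R}$ convex. Let $0<\tau_{\min}\le\tau_k\le\tau_{\max}<\infty$, let $d_k=\mathscr{P}_c(x_k-\tau_k\nabla f(x_k),\mu\tau_k)-x_k\neq0$, and let $\alpha_k\in(0,1]$ satisfy, with some $\theta>0$, both $\nu(\alpha_k)|1-\lambda(\alpha_k)|\ge\theta$ and $F_{k+1}-R_k\ge-\frac{\alpha_k^2}{2}L\|d_k\|^2+\alpha_k\Delta_k$, where $x_{k+1}=x_k+\alpha_kd_k$. Then $$\frac{F_k-F_{k+1}}{\|d_k\|^2}\ \ge\ \frac{\theta}{2L\tau_{\max}^2}>0 .$$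
   Context: Notation: $h_k=h(x_k)$, $\nabla h_k=\nabla h(x_k)$; $\mathscr{P}_c(x,\vartheta)=\operatorname{argmin}_y\{\vartheta c(y)+\frac12\|x-y\|^2\}$. $\Delta_k=d_k^T\nabla f_k+\mu(c(x_k+d_k)-c_k)$. Reference value: for an integer $N>0$, $m(0)=0$, $0\le m(k)\le\min\{m(k-1)+1,N-1\}$, $F_{l(k)}=\max_{0\le j\le m(k)}F_{k-j}$, and $R_k=\eta_kF_{l(k)}+(1-\eta_k)F_k$ with $\eta_k\in[0,1]$. Quotients: $\nu(\alpha_k)=\frac{F_{k+1}-F_k}{\alpha_k\Delta_k}$, $\lambda(\alpha_k)=\frac{F_{k+1}-R_k}{\alpha_k\Delta_k}$. *)

theory Defs
  imports "HOL-Analysis.Analysis"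
begin

text \<open>Proximal operator: P_c(x, theta) = argmin_y { theta * c y + 1/2 * norm (x - y)^2 }.
  For convex finite-valued c and theta > 0 the minimizer exists and is unique.\<close>
definition prox :: "('a::real_normed_vector \<Rightarrow> real) \<Rightarrow> 'a \<Rightarrow> real \<Rightarrow> 'a" where
  "prox c x t = (SOME y. \<forall>z. t * c y + (1/2) * (norm (x - y))\<^sup>2
                                \<le> t * c z + (1/2) * (norm (x - z))\<^sup>2)"

end

theory Submission
  imports Defs
begin

text \<open>The proximal direction d minimises a model of F at x, and comparing it with the trivial
  direction 0 gives \<tau> \<Delta> \<le> -\<parallel>d\<parallel>^2/2. The Lipschitz descent lemma and convexity of c bound
  F(x+\<alpha>d) - F(x) from above by \<alpha>\<Delta> + B with B = \<alpha>^2 L \<parallel>d\<parallel>^2/2. Together with the assumed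
  lower bound on F(x+\<alpha>d) - R and with R \<ge> F(x), this squeezes both quotients \<nu> \<le> \<lambda> into
  [1 - B/|\<alpha>\<Delta>|, 1 + B/|\<alpha>\<Delta>|], so \<theta> \<le> \<nu> |1 - \<lambda>| \<le> \<nu> B/|\<alpha>\<Delta>|, that is
  F(x) - F(x+\<alpha>d) \<ge> \<theta> (\<alpha>\<Delta>)^2/B; the bound on \<Delta> turns this into the claim.\<close>

lemma convex_on_linear_lower_bound:
  fixes c :: "'a::euclidean_space \<Rightarrow> real"
  assumes cc: "convex_on UNIV c"
  obtains M where "M \<ge> 0" "\<And>y. norm (y - w) \<ge> 1 \<Longrightarrow> c w - norm (y - w) * M \<le> c y"
proof -
  have contc: "continuous_on UNIV c" using convex_on_continuous[OF open_UNIV cc] .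
  obtain u0 where u0: "u0 \<in> cball w 1" "\<forall>y\<in>cball w 1. c u0 \<le> c y"
    using continuous_attains_inf[of "cball w 1" c] contc compact_cball
    by (metis centre_in_cball continuous_on_subset empty_iff top_greatest zero_le_one)
  define M where "M = c w - c u0"
  have "c w - norm (y - w) * M \<le> c y" if r1: "norm (y - w) \<ge> 1" for y
  proof -
    define r where "r = norm (y - w)"
    have r: "r \<ge> 1" using r1 r_def by simp
    define u where "u = (1 - 1/r) *\<^sub>R w + (1/r) *\<^sub>R y"
    have "u - w = (1/r) *\<^sub>R (y - w)" unfolding u_def by (simp add: algebra_simps)
    hence "u \<in> cball w 1" using r unfolding r_def by (simp add: dist_norm norm_minus_commute)
    hence "c u0 \<le> c u" using u0 by auto
    also have "c u \<le> (1 - 1/r) * c w + (1/r) * c y"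
      unfolding u_def by (rule convex_onD[OF cc]) (use r in auto)
    finally have "r * c u0 \<le> r * ((1 - 1/r) * c w + (1/r) * c y)" using r by simp
    hence "r * c u0 \<le> (r - 1) * c w + c y" using r by (simp add: algebra_simps)
    thus ?thesis unfolding M_def r_def[symmetric] by (simp add: algebra_simps)
  qed
  moreover have "M \<ge> 0" using u0 unfolding M_def by auto
  ultimately show thesis using that by blast
qed

lemma prox_objective_has_minimizer:
  fixes c :: "'a::euclidean_space \<Rightarrow> real"
  assumes cc: "convex_on UNIV c" and t: "t > 0"
  shows "\<exists>y. \<forall>z. t * c y + (1/2) * (norm (w - y))\<^sup>2 \<le> t * c z + (1/2) * (norm (w - z))\<^sup>2"
proof -
  define \<phi> where "\<phi> = (\<lambda>y. t * c y + (1/2) * (norm (w - y))\<^sup>2)"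
  have "continuous_on UNIV \<phi>"
    unfolding \<phi>_def using convex_on_continuous[OF open_UNIV cc] by (intro continuous_intros)
  obtain M where M: "M \<ge> 0" and lowb: "\<And>y. norm (y - w) \<ge> 1 \<Longrightarrow> c w - norm (y - w) * M \<le> c y"
    using convex_on_linear_lower_bound[OF cc] by blast
  define R where "R = max 1 (2*t*M + 1)"
  obtain y0 where y0: "y0 \<in> cball w R" "\<forall>y\<in>cball w R. \<phi> y0 \<le> \<phi> y"
    using continuous_attains_inf[of "cball w R" \<phi>] \<open>continuous_on UNIV \<phi>\<close> compact_cball
    by (metis R_def centre_in_cball continuous_on_subset empty_iff top_greatest le_max_iff_disj
        zero_le_one)
  have "\<phi> y0 \<le> \<phi> z" for z
  proof (cases "z \<in> cball w R")
    case True thus ?thesis using y0 by auto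
  next
    case False
    \<comment> \<open>outside the ball the quadratic term beats the linear decay of c\<close>
    define r where "r = norm (z - w)"
    have "r > R" using False unfolding r_def by (simp add: dist_norm norm_minus_commute)
    hence r1: "r \<ge> 1" and r2: "r > 2*t*M" unfolding R_def by auto
    have "t * c z \<ge> t * c w - t * r * M"
      using mult_left_mono[OF lowb[OF r1[unfolded r_def]], of t] t unfolding r_def
      by (simp add: algebra_simps)
    moreover have "(norm (w - z))\<^sup>2 = r^2" unfolding r_def by (simp add: norm_minus_commute)
    moreover have "r^2 > 2 * t * M * r" using r2 r1 by (simp add: power2_eq_square mult_strict_right_mono)
    ultimately have "\<phi> z > \<phi> w" unfolding \<phi>_def by (simp add: algebra_simps)
    moreover have "\<phi> y0 \<le> \<phi> w" using y0 R_def by auto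
    ultimately show ?thesis by linarith
  qed
  thus ?thesis unfolding \<phi>_def by blast
qed

lemma prox_minimal:
  fixes c :: "'a::euclidean_space \<Rightarrow> real"
  assumes "convex_on UNIV c" and "t > 0"
  shows "t * c (prox c w t) + (1/2) * (norm (w - prox c w t))\<^sup>2 \<le> t * c z + (1/2) * (norm (w - z))\<^sup>2"
  using someI_ex[OF prox_objective_has_minimizer[OF assms, of w]] unfolding prox_def by blast

lemma prox_gradient_step_decrease:
  fixes c :: "'a::euclidean_space \<Rightarrow> real" and x g :: 'a
  assumes cc: "convex_on UNIV c" and \<mu>: "\<mu> > 0" and t: "t > 0"
  defines "d \<equiv> prox c (x - t *\<^sub>R g) (\<mu> * t) - x"
  shows "t * (d \<bullet> g + \<mu> * (c (x + d) - c x)) \<le> - (norm d)\<^sup>2 / 2"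
proof -
  have "(\<mu> * t) * c (x + d) + (1/2) * (norm ((x - t *\<^sub>R g) - (x + d)))\<^sup>2
      \<le> (\<mu> * t) * c x + (1/2) * (norm ((x - t *\<^sub>R g) - x))\<^sup>2"
    using prox_minimal[OF cc, of "\<mu> * t" "x - t *\<^sub>R g" x] \<mu> t by (simp add: d_def)
  moreover have "(norm ((x - t *\<^sub>R g) - (x + d)))\<^sup>2 = (norm d)\<^sup>2 + 2 * t * (d \<bullet> g) + t\<^sup>2 * (norm g)\<^sup>2"
    unfolding power2_norm_eq_inner
    by (simp add: algebra_simps inner_commute[of g d] power2_eq_square)
  moreover have "(norm ((x - t *\<^sub>R g) - x))\<^sup>2 = t\<^sup>2 * (norm g)\<^sup>2"
    using t by (simp add: power2_eq_square)
  ultimately show ?thesis by (simp add: field_simps)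
qed

lemma prox_gradient_step_decrease_uniform:
  fixes c :: "'a::euclidean_space \<Rightarrow> real" and x g :: 'a
  assumes cc: "convex_on UNIV c" and \<mu>: "\<mu> > 0" and t: "0 < t" "t \<le> T"
  defines "d \<equiv> prox c (x - t *\<^sub>R g) (\<mu> * t) - x"
  shows "d \<bullet> g + \<mu> * (c (x + d) - c x) \<le> - (norm d)\<^sup>2 / (2 * T)"
proof -
  define \<Delta> where "\<Delta> = d \<bullet> g + \<mu> * (c (x + d) - c x)"
  define n where "n = (norm d)\<^sup>2"
  have "t * \<Delta> \<le> - n / 2"
    using prox_gradient_step_decrease[OF cc \<mu> t(1), of x g] unfolding \<Delta>_def n_def d_def .
  hence "\<Delta> \<le> - n / (2 * t)" using t(1) by (simp add: field_simps)
  moreover have "n / (2 * T) \<le> n / (2 * t)" using t unfolding n_def by (simp add: frac_le)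
  ultimately show ?thesis unfolding \<Delta>_def n_def by linarith
qed

lemma lipschitz_gradient_descent_bound:
  fixes f :: "'a::euclidean_space \<Rightarrow> real"
  assumes f_grad: "\<And>y. (f has_derivative (\<lambda>h. gradf y \<bullet> h)) (at y)"
    and grad_lip: "\<And>y z. norm (gradf y - gradf z) \<le> L * norm (y - z)"
    and a: "0 \<le> a"
  shows "f (x + a *\<^sub>R d) \<le> f x + a * (d \<bullet> gradf x) + a\<^sup>2 * L / 2 * (norm d)\<^sup>2"
proof -
  define g where "g = (\<lambda>s. f (x + s *\<^sub>R d) - s * (d \<bullet> gradf x) - s\<^sup>2 * L / 2 * (norm d)\<^sup>2)"
  have der: "(g has_real_derivative (gradf (x + s *\<^sub>R d) \<bullet> d - d \<bullet> gradf x - s * L * (norm d)\<^sup>2)) (at s)"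
    for s
  proof -
    have "((\<lambda>s. x + s *\<^sub>R d) has_derivative (\<lambda>h. h *\<^sub>R d)) (at s)"
      by (auto intro!: derivative_eq_intros)
    from has_derivative_compose[OF this f_grad]
    have "((\<lambda>s. f (x + s *\<^sub>R d)) has_real_derivative (gradf (x + s *\<^sub>R d) \<bullet> d)) (at s)"
      by (simp add: has_field_derivative_def mult_commute_abs)
    then show ?thesis unfolding g_def
      by (auto intro!: derivative_eq_intros simp: power2_eq_square algebra_simps)
  qed
  have "g a \<le> g 0"
  proof (rule DERIV_nonpos_imp_nonincreasing[OF a])
    fix s assume s: "0 \<le> s" "s \<le> a"
    have "gradf (x + s *\<^sub>R d) \<bullet> d - d \<bullet> gradf x = (gradf (x + s *\<^sub>R d) - gradf x) \<bullet> d"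
      by (simp add: inner_diff_left inner_diff_right inner_commute)
    also have "\<dots> \<le> norm (gradf (x + s *\<^sub>R d) - gradf x) * norm d" by (rule norm_cauchy_schwarz)
    also have "\<dots> \<le> (L * norm (s *\<^sub>R d)) * norm d"
      using grad_lip[of "x + s *\<^sub>R d" x] by (simp add: mult_right_mono)
    also have "\<dots> = s * L * (norm d)\<^sup>2" using s by (simp add: power2_eq_square)
    finally show "\<exists>y. (g has_real_derivative y) (at s) \<and> y \<le> 0" using der by force
  qed
  thus ?thesis unfolding g_def by simp
qed

lemma composite_descent_bound:
  fixes f c :: "'a::euclidean_space \<Rightarrow> real"
  assumes f_grad: "\<And>y. (f has_derivative (\<lambda>h. gradf y \<bullet> h)) (at y)"
    and grad_lip: "\<And>y z. norm (gradf y - gradf z) \<le> L * norm (y - z)"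
    and cc: "convex_on UNIV c" and \<mu>: "\<mu> \<ge> 0" and a: "0 \<le> a" "a \<le> 1"
  shows "(f (x + a *\<^sub>R d) + \<mu> * c (x + a *\<^sub>R d)) - (f x + \<mu> * c x)
    \<le> a * (d \<bullet> gradf x + \<mu> * (c (x + d) - c x)) + a\<^sup>2 * L / 2 * (norm d)\<^sup>2"
proof -
  have "c ((1 - a) *\<^sub>R x + a *\<^sub>R (x + d)) \<le> (1 - a) * c x + a * c (x + d)"
    by (rule convex_onD[OF cc]) (use a in auto)
  moreover have "(1 - a) *\<^sub>R x + a *\<^sub>R (x + d) = x + a *\<^sub>R d" by (simp add: algebra_simps)
  ultimately have "c (x + a *\<^sub>R d) \<le> c x + a * (c (x + d) - c x)"
    by (simp add: algebra_simps)
  hence "\<mu> * c (x + a *\<^sub>R d) \<le> \<mu> * (c x + a * (c (x + d) - c x))"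
    using \<mu> by (rule mult_left_mono)
  with lipschitz_gradient_descent_bound[OF f_grad grad_lip a(1), of x d]
  show ?thesis by (simp add: algebra_simps)
qed

lemma nonmonotone_reference_ge_current:
  fixes F :: "nat \<Rightarrow> real"
  assumes "0 \<le> \<eta>" "\<eta> \<le> 1"
  shows "F k \<le> \<eta> * Max ((\<lambda>j. F (k - j)) ` {0..m}) + (1 - \<eta>) * F k"
proof -
  have "F k \<le> Max ((\<lambda>j. F (k - j)) ` {0..m})"
    by (rule Max_ge) (auto intro: image_eqI[of _ _ 0])
  with assms show ?thesis by (simp add: algebra_simps mult_left_mono)
qed

lemma quotient_condition_decrease:
  fixes F0 F1 R A B \<theta> :: real
  assumes A: "A < 0" and B: "B > 0" and \<theta>: "\<theta> > 0"
    and upper: "F1 - F0 \<le> A + B" and lower: "F1 - R \<ge> A - B" and RF: "F0 \<le> R"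
    and quot: "(F1 - F0) / A * \<bar>1 - (F1 - R) / A\<bar> \<ge> \<theta>"
  shows "\<theta> * A\<^sup>2 / B \<le> F0 - F1"
proof -
  define \<nu> where "\<nu> = (F1 - F0) / A"
  define \<Lambda> where "\<Lambda> = (F1 - R) / A"
  have "\<nu> > 0"
    using quot \<theta> unfolding \<nu>_def[symmetric] \<Lambda>_def[symmetric]
    by (metis abs_ge_zero linorder_not_le mult_nonpos_nonneg order_less_le_trans)
  have "1 - B / (-A) = (A + B) / A" and "1 + B / (-A) = (A - B) / A" using A by (simp_all add: field_simps)
  hence "1 - B / (-A) \<le> \<nu>" and "\<Lambda> \<le> 1 + B / (-A)"
    using upper lower A unfolding \<nu>_def \<Lambda>_def by (simp_all add: divide_right_mono_neg)
  moreover have "\<nu> \<le> \<Lambda>" using RF A unfolding \<nu>_def \<Lambda>_def by (simp add: divide_right_mono_neg)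
  ultimately have "\<bar>1 - \<Lambda>\<bar> \<le> B / (-A)" by linarith
  hence "\<theta> \<le> \<nu> * (B / (-A))"
    using quot \<open>\<nu> > 0\<close> unfolding \<nu>_def[symmetric] \<Lambda>_def[symmetric]
    by (meson mult_left_mono order_trans less_imp_le)
  hence "\<theta> * (A\<^sup>2 / B) \<le> \<nu> * (B / (-A)) * (A\<^sup>2 / B)" by (rule mult_right_mono) (use B in simp)
  also have "\<dots> = F0 - F1" using A B unfolding \<nu>_def by (simp add: field_simps power2_eq_square)
  finally show ?thesis by simp
qed

lemma step_ratio_lower_bound:
  fixes a D L T \<theta> nd G :: real
  assumes a: "a > 0" and L: "L > 0" and T: "T > 0" and nd: "nd > 0" and \<theta>: "\<theta> \<ge> 0"
    and D: "D \<le> - nd / (2 * T)" and G: "\<theta> * (a * D)\<^sup>2 / (a\<^sup>2 * L / 2 * nd) \<le> G"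
  shows "\<theta> / (2 * L * T\<^sup>2) \<le> G / nd"
proof -
  have "(nd / (2 * T))\<^sup>2 \<le> D\<^sup>2"
    using power_mono[of "nd / (2 * T)" "-D" 2] D nd T by simp
  hence "2 * \<theta> * (nd / (2 * T))\<^sup>2 / (L * nd) \<le> 2 * \<theta> * D\<^sup>2 / (L * nd)"
    using \<theta> L nd by (simp add: divide_right_mono mult_left_mono)
  also have "\<dots> = \<theta> * (a * D)\<^sup>2 / (a\<^sup>2 * L / 2 * nd)"
    using a by (simp add: field_simps power2_eq_square)
  also have "\<dots> \<le> G" by (rule G)
  finally have "\<theta> / (2 * L * T\<^sup>2) * nd \<le> G"
    using T nd by (simp add: field_simps power2_eq_square)
  thus ?thesis using nd by (simp add: field_simps)
qed

theorem mainTheorem4: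
  fixes f c :: "'a::euclidean_space \<Rightarrow> real"
    and gradf :: "'a \<Rightarrow> 'a"
    and \<mu> L \<tau>min \<tau>max \<theta> :: real
    and x :: "nat \<Rightarrow> 'a"
    and \<tau> \<alpha> \<eta> :: "nat \<Rightarrow> real"
    and m :: "nat \<Rightarrow> nat" and N k :: nat
  assumes mu_pos: "\<mu> > 0"
    and f_convex: "convex_on UNIV f"
    and f_grad: "\<And>y. (f has_derivative (\<lambda>h. gradf y \<bullet> h)) (at y)"
    and grad_cont: "continuous_on UNIV gradf"
    and L_pos: "L > 0"
    and grad_lip: "\<And>y z. norm (gradf y - gradf z) \<le> L * norm (y - z)"
    and c_convex: "convex_on UNIV c"
    and tau_bounds: "0 < \<tau>min" "\<tau>min \<le> \<tau> k" "\<tau> k \<le> \<tau>max"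
    and N_pos: "N > 0"
    and m0: "m 0 = 0"
    and m_step: "\<And>j. m (Suc j) \<le> min (m j + 1) (N - 1)"
    and eta_range: "\<And>j. 0 \<le> \<eta> j \<and> \<eta> j \<le> 1"
    and d_nz: "prox c (x k - \<tau> k *\<^sub>R gradf (x k)) (\<mu> * \<tau> k) - x k \<noteq> 0"
    and alpha_range: "0 < \<alpha> k" "\<alpha> k \<le> 1"
    and theta_pos: "\<theta> > 0"
    and x_next: "x (Suc k) = x k + \<alpha> k *\<^sub>R (prox c (x k - \<tau> k *\<^sub>R gradf (x k)) (\<mu> * \<tau> k) - x k)"
    and cond1: "let F = (\<lambda>y. f y + \<mu> * c y);
                    d = prox c (x k - \<tau> k *\<^sub>R gradf (x k)) (\<mu> * \<tau> k) - x k;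
                    \<Delta> = d \<bullet> gradf (x k) + \<mu> * (c (x k + d) - c (x k));
                    Fl = Max ((\<lambda>j. F (x (k - j))) ` {0..m k});
                    R = \<eta> k * Fl + (1 - \<eta> k) * F (x k);
                    \<nu> = (F (x (Suc k)) - F (x k)) / (\<alpha> k * \<Delta>);
                    lam = (F (x (Suc k)) - R) / (\<alpha> k * \<Delta>)
                in \<nu> * \<bar>1 - lam\<bar> \<ge> \<theta>"
    and cond2: "let F = (\<lambda>y. f y + \<mu> * c y);
                    d = prox c (x k - \<tau> k *\<^sub>R gradf (x k)) (\<mu> * \<tau> k) - x k;
                    \<Delta> = d \<bullet> gradf (x k) + \<mu> * (c (x k + d) - c (x k));
                    Fl = Max ((\<lambda>j. F (x (k - j))) ` {0..m k});
                    R = \<eta> k * Fl + (1 - \<eta> k) * F (x k)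
                in F (x (Suc k)) - R \<ge> - ((\<alpha> k)\<^sup>2 / 2) * L * (norm d)\<^sup>2 + \<alpha> k * \<Delta>"
  shows "let F = (\<lambda>y. f y + \<mu> * c y);
             d = prox c (x k - \<tau> k *\<^sub>R gradf (x k)) (\<mu> * \<tau> k) - x k
         in (F (x k) - F (x (Suc k))) / (norm d)\<^sup>2 \<ge> \<theta> / (2 * L * \<tau>max\<^sup>2)
            \<and> \<theta> / (2 * L * \<tau>max\<^sup>2) > 0"
proof -
  define F where "F = (\<lambda>y. f y + \<mu> * c y)"
  define d where "d = prox c (x k - \<tau> k *\<^sub>R gradf (x k)) (\<mu> * \<tau> k) - x k"
  define \<Delta> where "\<Delta> = d \<bullet> gradf (x k) + \<mu> * (c (x k + d) - c (x k))"
  define R where "R = \<eta> k * Max ((\<lambda>j. F (x (k - j))) ` {0..m k}) + (1 - \<eta> k) * F (x k)"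
  have nd: "(norm d)\<^sup>2 > 0" using d_nz unfolding d_def by simp
  have \<tau>max: "\<tau>max > 0" using tau_bounds by linarith
  have \<Delta>_bound: "\<Delta> \<le> - (norm d)\<^sup>2 / (2 * \<tau>max)"
    unfolding \<Delta>_def d_def using prox_gradient_step_decrease_uniform[OF c_convex mu_pos] tau_bounds by simp
  moreover have "(norm d)\<^sup>2 / (2 * \<tau>max) > 0" using nd \<tau>max by simp
  ultimately have "\<Delta> < 0" by linarith
  have upper: "F (x (Suc k)) - F (x k) \<le> \<alpha> k * \<Delta> + (\<alpha> k)\<^sup>2 * L / 2 * (norm d)\<^sup>2"
    using composite_descent_bound[OF f_grad grad_lip c_convex, of \<mu> "\<alpha> k" "x k" d]
      mu_pos alpha_range x_next unfolding F_def \<Delta>_def d_def by simp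
  have "F (x k) \<le> R"
    unfolding R_def using nonmonotone_reference_ge_current[of "\<eta> k" "\<lambda>j. F (x j)"] eta_range by simp
  moreover have "0 < (\<alpha> k)\<^sup>2 * L / 2 * (norm d)\<^sup>2" using alpha_range L_pos nd by simp
  moreover have "\<alpha> k * \<Delta> < 0" using \<open>\<Delta> < 0\<close> alpha_range by (simp add: mult_pos_neg)
  ultimately have "\<theta> * (\<alpha> k * \<Delta>)\<^sup>2 / ((\<alpha> k)\<^sup>2 * L / 2 * (norm d)\<^sup>2) \<le> F (x k) - F (x (Suc k))"
    using quotient_condition_decrease[OF _ _ theta_pos upper] cond1 cond2
    unfolding Let_def F_def[symmetric] d_def[symmetric] \<Delta>_def[symmetric] R_def[symmetric]
    by (simp add: algebra_simps)
  from step_ratio_lower_bound[OF _ L_pos \<tau>max nd _ \<Delta>_bound this] alpha_range theta_pos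
  show ?thesis unfolding Let_def F_def[symmetric] d_def[symmetric] using L_pos \<tau>max by simp
qed

end
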